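(* Let $1\le p<\infty$, $\alpha>0$, $m>0$, and assume that the differentiation operator $Df=f'$ is bounded on $\mathcal{F}^p_{(\alpha,m)}$. Then the following are equivalent: (i) $D$ is power bounded and uniformly mean ergodic on $\mathcal{F}^p_{(\alpha,m)}$; (ii) either $m<1$, or $m=1$ and $\alpha<1$.
   Context: For $\alpha>0$, $m>0$ and $1\le p<\infty$, $\mathcal{F}^p_{(\alpha,m)}$ denotes the Banach space of entire functions $f$ on $\mathbb{C}$ with $\|f\|_{(p,\alpha,m)}^p=\int_{\mathbb{C}}|f(z)|^pe^{-p\alpha|z|^m}\,dA(z)<\infty$, where $dA$ is Lebesgue area measure. A bounded operator $T$ on a Banach space is power bounded if $\sup_{n\ge0}\|T^n\|<\infty$, and uniformly mean ergodic if the Cesàro means $\frac1n\sum_{k=1}^nT^k$ converge in operator norm as $n\to\infty$. *)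

theory Defs
  imports "HOL-Analysis.Analysis"
begin

definition fock_integral :: "real \<Rightarrow> real \<Rightarrow> real \<Rightarrow> (complex \<Rightarrow> complex) \<Rightarrow> ennreal" where
  "fock_integral p \<alpha> m f =
     (\<integral>\<^sup>+ z. ennreal (norm (f z) powr p * exp (- p * \<alpha> * norm z powr m)) \<partial>lborel)"

definition fock_space :: "real \<Rightarrow> real \<Rightarrow> real \<Rightarrow> (complex \<Rightarrow> complex) set" where
  "fock_space p \<alpha> m = {f. f holomorphic_on UNIV \<and> fock_integral p \<alpha> m f < \<infinity>}"

definition fock_norm :: "real \<Rightarrow> real \<Rightarrow> real \<Rightarrow> (complex \<Rightarrow> complex) \<Rightarrow> real" where
  "fock_norm p \<alpha> m f = enn2real (fock_integral p \<alpha> m f) powr (1 / p)"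

definition Dop :: "(complex \<Rightarrow> complex) \<Rightarrow> (complex \<Rightarrow> complex)" where
  "Dop f = deriv f"

definition D_bounded :: "real \<Rightarrow> real \<Rightarrow> real \<Rightarrow> bool" where
  "D_bounded p \<alpha> m \<longleftrightarrow>
     (\<forall>f \<in> fock_space p \<alpha> m. Dop f \<in> fock_space p \<alpha> m) \<and>
     (\<exists>C. \<forall>f \<in> fock_space p \<alpha> m. fock_norm p \<alpha> m (Dop f) \<le> C * fock_norm p \<alpha> m f)"

definition D_power_bounded :: "real \<Rightarrow> real \<Rightarrow> real \<Rightarrow> bool" where
  "D_power_bounded p \<alpha> m \<longleftrightarrow>
     (\<exists>C. \<forall>n. \<forall>f \<in> fock_space p \<alpha> m.
        fock_norm p \<alpha> m ((Dop ^^ n) f) \<le> C * fock_norm p \<alpha> m f)"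

definition cesaro_D :: "nat \<Rightarrow> (complex \<Rightarrow> complex) \<Rightarrow> (complex \<Rightarrow> complex)" where
  "cesaro_D n f = (\<lambda>z. (1 / of_nat n) * (\<Sum>k = 1..n. (Dop ^^ k) f z))"

definition D_uniformly_mean_ergodic :: "real \<Rightarrow> real \<Rightarrow> real \<Rightarrow> bool" where
  "D_uniformly_mean_ergodic p \<alpha> m \<longleftrightarrow>
     (\<exists>P. (\<forall>f \<in> fock_space p \<alpha> m. P f \<in> fock_space p \<alpha> m) \<and>
       (\<forall>\<epsilon>>0. \<forall>\<^sub>F n in sequentially. \<forall>f \<in> fock_space p \<alpha> m.
          fock_norm p \<alpha> m (\<lambda>z. cesaro_D n f z - P f z) \<le> \<epsilon> * fock_norm p \<alpha> m f))"

end

theory Submission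
  imports Defs "HOL-Complex_Analysis.Cauchy_Integral_Formula"
begin

text \<open>If \<open>m < 1\<close>, or \<open>m = 1\<close> and \<open>\<alpha> < 1\<close>: Cauchy's estimate on the circle of radius \<open>R\<close>
  about \<open>z\<close>, raised to the power \<open>p\<close> by Jensen's inequality and integrated against the weight,
  gives \<open>\<parallel>D^k f\<parallel>^p \<le> (k!/R^k)^p exp(p \<alpha> R^m) \<parallel>f\<parallel>^p\<close>, because translating by a vector of
  length \<open>R\<close> changes the weight by at most the factor \<open>exp(p \<alpha> R^m)\<close>. Writing
  \<open>\<alpha> R^m \<le> \<beta> R + K\<close> with \<open>\<beta> < 1\<close>, choosing \<open>R = k/\<beta>\<close> and using \<open>k! e^k \<le> e k^(k+1)\<close>,
  the norms \<open>\<parallel>D^k\<parallel>\<close> decay geometrically; hence \<open>D\<close> is power bounded and its Cesaro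
  means tend to \<open>0\<close> in operator norm.

  Otherwise every \<open>exp(\<lambda> z)\<close> with \<open>0 \<le> \<lambda> < 1\<close> lies in the space; it is an eigenvector of \<open>D\<close>,
  on which the \<open>n\<close>-th Cesaro mean acts as the scalar \<open>(\<lambda> + ... + \<lambda>^n)/n\<close>. For
  \<open>\<lambda> = 1 - 1/(2N)\<close> these scalars at \<open>n = N\<close> and \<open>n = 8N\<close> differ by at least \<open>1/4\<close>, which
  is incompatible with convergence of the means in operator norm.\<close>

lemma powr_above_tangent:
  fixes a x p :: real
  assumes a: "a > 0" and x: "x \<ge> 0" and p: "p \<ge> 1"
  shows "a powr p + p * a powr (p - 1) * (x - a) \<le> x powr p"
proof (cases "x = 0")
  case True
  have "a powr (p - 1) * a = a powr p" using a by (simp add: powr_diff)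
  have "p * a powr (p - 1) * (x - a) = - p * (a powr (p - 1) * a)"
    using True by (simp add: algebra_simps)
  also have "\<dots> = - p * a powr p"
    by (simp only: \<open>a powr (p - 1) * a = a powr p\<close>)
  finally have eq: "p * a powr (p - 1) * (x - a) = - p * a powr p" .
  have "a powr p \<le> p * a powr p"
    using p a by (simp add: mult_le_cancel_right1)
  then show ?thesis unfolding eq using True by simp
next
  case False
  then have "x > 0" using x by simp
  have "p * a powr (p - 1) * (x - a) \<le> x powr p - a powr p"
  proof (rule convex_on_imp_above_tangent[where A = "{0<..}"])
    show "convex_on {0<..} (\<lambda>x. x powr p)" using powr_convex[OF p] .
    show "((\<lambda>x. x powr p) has_field_derivative p * a powr (p - 1)) (at a within {0<..})"
      using a by (auto intro!: derivative_eq_intros)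
  qed (use a \<open>x > 0\<close> in \<open>auto simp: interior_open\<close>)
  then show ?thesis by simp
qed

lemma powr_mean_le_mean_powr:
  fixes x :: "'a \<Rightarrow> real"
  assumes S: "finite S" "S \<noteq> {}" and x: "\<And>k. k \<in> S \<Longrightarrow> x k \<ge> 0" and p: "p \<ge> 1"
  shows "((\<Sum>k\<in>S. x k) / card S) powr p \<le> (\<Sum>k\<in>S. x k powr p) / card S"
proof -
  define a where "a = (\<Sum>k\<in>S. x k) / card S"
  have cS: "real (card S) > 0" using S by (simp add: card_gt_0_iff)
  have "a \<ge> 0" unfolding a_def using x by (intro divide_nonneg_pos sum_nonneg cS) auto
  show ?thesis
  proof (cases "a = 0")
    case True
    then show ?thesis using cS p unfolding a_def[symmetric] by (simp add: sum_nonneg)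
  next
    case False
    with \<open>a \<ge> 0\<close> have "a > 0" by simp
    have "(\<Sum>k\<in>S. a powr p + p * a powr (p - 1) * (x k - a)) \<le> (\<Sum>k\<in>S. x k powr p)"
      by (intro sum_mono powr_above_tangent[OF \<open>a > 0\<close> _ p] x)
    moreover have "(\<Sum>k\<in>S. a powr p + p * a powr (p - 1) * (x k - a))
        = card S * a powr p + p * a powr (p - 1) * ((\<Sum>k\<in>S. x k) - card S * a)"
      by (simp add: sum.distrib sum_distrib_left[symmetric] sum_subtractf)
    moreover have "(\<Sum>k\<in>S. x k) - card S * a = 0" using cS by (simp add: a_def)
    ultimately have "card S * a powr p \<le> (\<Sum>k\<in>S. x k powr p)" by simp
    then show ?thesis using cS unfolding a_def[symmetric] by (simp add: field_simps)
  qed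
qed

lemma powr_integral_le_integral_powr:
  fixes g :: "real \<Rightarrow> real"
  assumes g: "continuous_on {0..1} g" "\<And>t. t \<in> {0..1} \<Longrightarrow> g t \<ge> 0" and p: "p \<ge> 1"
  shows "(integral {0..1} g) powr p \<le> integral {0..1} (\<lambda>t. g t powr p)"
proof -
  define a where "a = integral {0..1} g"
  have gi: "g integrable_on {0..1}" using g integrable_continuous_interval by blast
  have gpi: "(\<lambda>t. g t powr p) integrable_on {0..1}"
    using g p by (intro integrable_continuous_interval continuous_on_powr') auto
  have "a \<ge> 0" unfolding a_def using g by (intro integral_nonneg[OF gi]) auto
  show ?thesis
  proof (cases "a = 0")
    case True
    then show ?thesis using p unfolding a_def[symmetric]
      by (simp add: integral_nonneg[OF gpi])
  next
    case False
    with \<open>a \<ge> 0\<close> have "a > 0" by simp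
    have tangent: "((\<lambda>t. a powr p + p * a powr (p - 1) * (g t - a)) has_integral
            a powr p + p * a powr (p - 1) * (a - a)) {0..1}"
      using has_integral_const_real[of "a powr p" 0 1] has_integral_const_real[of a 0 1]
        integrable_integral[OF gi]
      by (intro has_integral_add has_integral_mult_right has_integral_diff) (auto simp: a_def)
    then have "integral {0..1} (\<lambda>t. a powr p + p * a powr (p - 1) * (g t - a)) = a powr p"
      by (simp add: integral_unique)
    moreover have "integral {0..1} (\<lambda>t. a powr p + p * a powr (p - 1) * (g t - a))
        \<le> integral {0..1} (\<lambda>t. g t powr p)"
      by (rule integral_le[OF has_integral_integrable[OF tangent] gpi])
        (use powr_above_tangent[OF \<open>a > 0\<close> _ p] g in auto)
    ultimately show ?thesis by (simp add: a_def)
  qed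
qed

lemma powr_add_le_add_powr:
  fixes a b m :: real
  assumes a: "a \<ge> 0" and b: "b \<ge> 0" and m: "0 < m" "m \<le> 1"
  shows "(a + b) powr m \<le> a powr m + b powr m"
proof (cases "a + b = 0")
  case True
  then show ?thesis using a b by simp
next
  case False
  then have s: "a + b > 0" using a b by simp
  have "a / (a + b) \<le> (a / (a + b)) powr m" "b / (a + b) \<le> (b / (a + b)) powr m"
    using powr_mono'[of m 1 "a / (a+b)"] powr_mono'[of m 1 "b / (a+b)"] m a b s by simp_all
  moreover have "1 = a / (a + b) + b / (a + b)"
    using s by (simp add: add_divide_distrib[symmetric])
  ultimately have "1 \<le> (a powr m + b powr m) / (a + b) powr m"
    using a b s by (simp add: powr_divide add_divide_distrib)
  then show ?thesis using s by (simp add: field_simps)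
qed

lemma powr_le_two_powr_add:
  fixes u x y p :: real
  assumes "0 \<le> u" "u \<le> x + y" "0 \<le> x" "0 \<le> y" "p > 0"
  shows "u powr p \<le> 2 powr p * (x powr p + y powr p)"
proof -
  have "u powr p \<le> (2 * max x y) powr p" using assms by (intro powr_mono2) auto
  also have "\<dots> = 2 powr p * max x y powr p" by (simp add: powr_mult)
  also have "max x y powr p \<le> x powr p + y powr p" by (simp add: max_def)
  finally show ?thesis by simp
qed

lemma fact_mult_exp_le:
  fixes k :: nat
  assumes "k \<ge> 1"
  shows "fact k * exp (real k) \<le> exp 1 * real k * real k ^ k"
  using assms
proof (induction k rule: dec_induct)
  case base
  then show ?case by simp
next
  case (step k)
  have k: "real k \<ge> 1" using step.hyps by simp
  have "ln (real k / (real k + 1)) \<le> real k / (real k + 1) - 1"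
    using k by (intro ln_le_minus_one) auto
  then have "1 / (real k + 1) \<le> ln (real k + 1) - ln (real k)"
    using k by (simp add: ln_div field_simps)
  then have "1 + real (Suc k) * ln (real k) \<le> real (Suc k) * ln (real k + 1)"
    using k by (simp add: field_simps)
  then have "exp (1 + real (Suc k) * ln (real k)) \<le> exp (real (Suc k) * ln (real k + 1))"
    by simp
  moreover have "exp (real (Suc k) * ln x) = x ^ Suc k" if "x > 0" for x :: real
    using that by (simp only: exp_of_nat_mult exp_ln)
  ultimately have key: "exp 1 * real k ^ Suc k \<le> (real k + 1) ^ Suc k"
    using k by (simp add: exp_add)
  have "fact (Suc k) * exp (real (Suc k)) = (real k + 1) * exp 1 * (fact k * exp (real k))"
    by (simp add: exp_add[symmetric] algebra_simps)
  also have "\<dots> \<le> (real k + 1) * exp 1 * (exp 1 * real k ^ Suc k)"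
    using step.IH by (intro mult_left_mono) auto
  also have "\<dots> \<le> (real k + 1) * exp 1 * (real k + 1) ^ Suc k"
    using key by (intro mult_left_mono) auto
  also have "\<dots> = exp 1 * real (Suc k) * real (Suc k) ^ Suc k" by (simp add: algebra_simps)
  finally show ?case .
qed

lemma powr_le_linear_plus_const:
  fixes \<alpha> m :: real
  assumes a: "\<alpha> > 0" and m: "0 < m" "m \<le> 1" and c: "m < 1 \<or> \<alpha> < 1"
  shows "\<exists>\<beta> K. 0 < \<beta> \<and> \<beta> < 1 \<and> K \<ge> 0 \<and> (\<forall>R\<ge>0. \<alpha> * R powr m \<le> \<beta> * R + K)"
proof (cases "m = 1")
  case True
  with c have "\<alpha> < 1" by simp
  then show ?thesis using a True by (intro exI[of _ \<alpha>] exI[of _ 0]) auto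
next
  case False
  with m have m1: "m < 1" by simp
  define R0 where "R0 = (2 * \<alpha>) powr (1 / (1 - m))"
  have R0: "R0 > 0" using a by (simp add: R0_def)
  define K where "K = \<alpha> * R0 powr m"
  have "K \<ge> 0" using a by (simp add: K_def)
  have "\<alpha> * R powr m \<le> 1 / 2 * R + K" if R: "R \<ge> 0" for R :: real
  proof (cases "R \<le> R0")
    case True
    then have "R powr m \<le> R0 powr m" using R m by (intro powr_mono2) auto
    then have "\<alpha> * R powr m \<le> K" using a by (simp add: K_def)
    then show ?thesis using R by simp
  next
    case False
    then have Rp: "R > R0" "R > 0" using R0 by auto
    have "2 * \<alpha> = R0 powr (1 - m)" unfolding R0_def using a m1 by (simp add: powr_powr)
    also have "\<dots> \<le> R powr (1 - m)" using Rp R0 m1 by (intro powr_mono2) auto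
    finally have "2 * \<alpha> * R powr m \<le> R powr (1 - m) * R powr m" by (intro mult_right_mono) auto
    also have "\<dots> = R" using Rp by (simp add: powr_add[symmetric])
    finally show ?thesis using \<open>K \<ge> 0\<close> by simp
  qed
  then show ?thesis using \<open>K \<ge> 0\<close> by (intro exI[of _ "1/2"] exI[of _ K]) auto
qed

lemma linear_minus_powr_le:
  fixes \<alpha> m :: real
  assumes a: "\<alpha> > 0" and m: "m > 1"
  shows "\<exists>K. \<forall>t\<ge>0. t - \<alpha> * t powr m \<le> K - t"
proof -
  define R0 where "R0 = (2 / \<alpha>) powr (1 / (m - 1))"
  have R0: "R0 > 0" using a by (simp add: R0_def)
  have "t - \<alpha> * t powr m \<le> 2 * R0 - t" if t: "t \<ge> 0" for t
  proof (cases "t \<le> R0")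
    case True
    moreover have "\<alpha> * t powr m \<ge> 0" using a by simp
    ultimately show ?thesis by simp
  next
    case False
    then have tp: "t > 0" "t > R0" using R0 by auto
    have "2 / \<alpha> = R0 powr (m - 1)" unfolding R0_def using a m by (simp add: powr_powr)
    also have "\<dots> \<le> t powr (m - 1)" using tp R0 m by (intro powr_mono2) auto
    finally have "2 * t \<le> \<alpha> * t powr (m - 1) * t" using a tp by (simp add: field_simps)
    also have "\<alpha> * t powr (m - 1) * t = \<alpha> * t powr m"
      using tp by (simp add: powr_diff field_simps)
    finally show ?thesis using R0 by simp
  qed
  then show ?thesis by blast
qed

section \<open>Cauchy estimates averaged over a circle\<close>

lemma norm_higher_deriv_le_circle_mean:
  fixes f :: "complex \<Rightarrow> complex"
  assumes hol: "f holomorphic_on UNIV" and R: "R > 0"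
  shows "norm ((deriv ^^ k) f z) \<le>
    fact k / R^k * integral {0..1} (\<lambda>t. norm (f (z + R * exp (2 * of_real pi * \<i> * of_real t))))"
proof -
  define g where "g = (\<lambda>t::real. norm (f (z + R * exp (2 * of_real pi * \<i> * of_real t))))"
  have "((\<lambda>u. f u / (u-z) ^ (Suc k)) has_contour_integral ((2 * pi * \<i>) / (fact k) * (deriv ^^ k) f z)) (circlepath z R)"
    by (rule Cauchy_has_contour_integral_higher_derivative_circlepath)
       (use hol R continuous_on_subset[OF holomorphic_on_imp_continuous_on[OF hol]] in \<open>auto elim: holomorphic_on_subset\<close>)
  then have hi: "((\<lambda>x. f (circlepath z R x) / (circlepath z R x - z) ^ Suc k * vector_derivative (circlepath z R) (at x within {0..1}))
      has_integral ((2 * pi * \<i>) / (fact k) * (deriv ^^ k) f z)) {0..1}"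
    by (simp add: has_contour_integral_def)
  have gi: "g integrable_on {0..1}"
    unfolding g_def using hol
    by (intro integrable_continuous_interval continuous_intros
        continuous_on_compose2[OF holomorphic_on_imp_continuous_on[OF hol]]) auto
  have "norm ((2 * pi * \<i>) / (fact k) * (deriv ^^ k) f z) \<le> integral {0..1} (\<lambda>t. 2 * pi / R^k * g t)"
    unfolding integral_unique[OF hi, symmetric]
  proof (rule integral_norm_bound_integral[OF has_integral_integrable[OF hi]])
    show "(\<lambda>t. 2 * pi / R ^ k * g t) integrable_on {0..1}"
      using integrable_on_cmult_left[OF gi, of "2 * pi / R^k"] by (simp add: mult.assoc)
    fix x :: real assume x: "x \<in> {0..1}"
    define E where "E = exp (2 * of_real pi * \<i> * of_real x)"
    have "norm E = 1" by (simp add: E_def norm_exp)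
    have "vector_derivative (circlepath z R) (at x within {0..1}) = 2 * pi * \<i> * R * E"
      using x by (simp add: vector_derivative_circlepath01 E_def)
    moreover have "circlepath z R x = z + R * E" by (simp add: circlepath E_def)
    moreover have "norm (f (z + R * E) / (R * E) ^ Suc k * (2 * pi * \<i> * R * E)) = 2 * pi / R ^ k * g x"
      using R \<open>norm E = 1\<close> by (auto simp: g_def E_def norm_mult norm_divide norm_power field_simps)
    ultimately show "norm (f (circlepath z R x) / (circlepath z R x - z) ^ Suc k *
        vector_derivative (circlepath z R) (at x within {0..1})) \<le> 2 * pi / R ^ k * g x"
      by simp
  qed
  then have "2 * pi / fact k * norm ((deriv ^^ k) f z) \<le> 2 * pi / R^k * integral {0..1} g"
    by (simp add: norm_mult norm_divide)
  then have "norm ((deriv ^^ k) f z) \<le> fact k / R^k * integral {0..1} g"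
    using R by (simp add: field_simps)
  then show ?thesis by (simp add: g_def)
qed

lemma higher_deriv_powr_le_circle_mean:
  fixes f :: "complex \<Rightarrow> complex"
  assumes hol: "f holomorphic_on UNIV" and R: "R > 0" and p: "p \<ge> 1"
  shows "ennreal (norm ((deriv ^^ k) f z) powr p) \<le> ennreal ((fact k / R^k) powr p) *
     (\<integral>\<^sup>+ t. ennreal (norm (f (z + R * exp (2 * of_real pi * \<i> * of_real t))) powr p) * indicator {0..1} t \<partial>lborel)"
proof -
  define g where "g = (\<lambda>t::real. norm (f (z + R * exp (2 * of_real pi * \<i> * of_real t))))"
  have contg: "continuous_on {0..1} g"
    unfolding g_def using hol
    by (intro continuous_intros continuous_on_compose2[OF holomorphic_on_imp_continuous_on[OF hol]]) auto
  have gpi: "(\<lambda>t. g t powr p) integrable_on {0..1}"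
    using contg p by (intro integrable_continuous_interval continuous_on_powr') (auto simp: g_def)
  have "integral {0..1} g \<ge> 0"
    by (rule integral_nonneg[OF integrable_continuous_interval[OF contg]]) (simp add: g_def)
  have "norm ((deriv ^^ k) f z) powr p \<le> (fact k / R^k * integral {0..1} g) powr p"
    using norm_higher_deriv_le_circle_mean[OF hol R, of k z] p by (intro powr_mono2) (auto simp: g_def)
  also have "\<dots> = (fact k / R^k) powr p * (integral {0..1} g) powr p"
    using \<open>integral {0..1} g \<ge> 0\<close> by (subst powr_mult) auto
  also have "\<dots> \<le> (fact k / R^k) powr p * integral {0..1} (\<lambda>t. g t powr p)"
    by (intro mult_left_mono powr_integral_le_integral_powr[OF contg _ p]) (auto simp: g_def)
  finally have "ennreal (norm ((deriv ^^ k) f z) powr p) \<le>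
      ennreal ((fact k / R^k) powr p) * ennreal (integral {0..1} (\<lambda>t. g t powr p))"
    by (subst ennreal_mult[symmetric]) (auto intro: ennreal_leI integral_nonneg[OF gpi])
  also have "ennreal (integral {0..1} (\<lambda>t. g t powr p)) = (\<integral>\<^sup>+ t. ennreal (g t powr p) * indicator {0..1} t \<partial>lborel)"
    by (rule nn_integral_has_integral_lebesgue'[symmetric]) (use gpi in auto)
  finally show ?thesis by (simp add: g_def)
qed

lemma fock_norm_nonneg: "fock_norm p \<alpha> m f \<ge> 0"
  by (simp add: fock_norm_def)

lemma fock_integrand_measurable:
  fixes f :: "complex \<Rightarrow> complex"
  assumes "continuous_on UNIV f" and "p > 0" and "m > 0"
  shows "(\<lambda>z. ennreal (norm (f z) powr p * exp (- p * \<alpha> * norm z powr m))) \<in> borel_measurable borel"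
proof -
  have "continuous_on UNIV (\<lambda>z. norm (f z) powr p * exp (- p * \<alpha> * norm z powr m))"
    by (intro continuous_intros continuous_on_powr') (use assms in auto)
  from borel_measurable_continuous_onI[OF this] show ?thesis by measurable
qed

lemma fock_integral_scale:
  fixes F :: "complex \<Rightarrow> complex"
  assumes "continuous_on UNIV F" and "p > 0" and "m > 0"
  shows "fock_integral p \<alpha> m (\<lambda>z. c * F z) = ennreal (norm c powr p) * fock_integral p \<alpha> m F"
proof -
  have "fock_integral p \<alpha> m (\<lambda>z. c * F z) = (\<integral>\<^sup>+ z. ennreal (norm c powr p) *
      ennreal (norm (F z) powr p * exp (- p * \<alpha> * norm z powr m)) \<partial>lborel)"
    unfolding fock_integral_def
    by (intro nn_integral_cong) (simp add: norm_mult powr_mult ennreal_mult[symmetric] mult.assoc)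
  also have "\<dots> = ennreal (norm c powr p) * fock_integral p \<alpha> m F"
    unfolding fock_integral_def using fock_integrand_measurable[OF assms] by (simp add: nn_integral_cmult)
  finally show ?thesis .
qed

lemma fock_integral_diff_le:
  fixes F G :: "complex \<Rightarrow> complex"
  assumes F: "continuous_on UNIV F" and G: "continuous_on UNIV G" and p: "p > 0" and m: "m > 0"
  shows "fock_integral p \<alpha> m (\<lambda>z. F z - G z) \<le>
    ennreal (2 powr p) * (fock_integral p \<alpha> m F + fock_integral p \<alpha> m G)"
proof -
  define w where "w z = exp (- p * \<alpha> * norm z powr m)" for z :: complex
  have "fock_integral p \<alpha> m (\<lambda>z. F z - G z) \<le> (\<integral>\<^sup>+ z. ennreal (2 powr p) *
      (ennreal (norm (F z) powr p * w z) + ennreal (norm (G z) powr p * w z)) \<partial>lborel)"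
    unfolding fock_integral_def
  proof (intro nn_integral_mono)
    fix z
    have "norm (F z - G z) powr p \<le> 2 powr p * (norm (F z) powr p + norm (G z) powr p)"
      using p by (intro powr_le_two_powr_add norm_triangle_ineq4) auto
    then have "norm (F z - G z) powr p * w z \<le> 2 powr p * (norm (F z) powr p + norm (G z) powr p) * w z"
      by (rule mult_right_mono) (simp add: w_def)
    then have "ennreal (norm (F z - G z) powr p * w z) \<le>
        ennreal (2 powr p * (norm (F z) powr p * w z + norm (G z) powr p * w z))"
      by (intro ennreal_leI) (simp add: algebra_simps)
    also have "\<dots> = ennreal (2 powr p) * (ennreal (norm (F z) powr p * w z) + ennreal (norm (G z) powr p * w z))"
      by (simp add: ennreal_mult ennreal_plus w_def)
    finally show "ennreal (norm (F z - G z) powr p * exp (- p * \<alpha> * norm z powr m)) \<le>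
        ennreal (2 powr p) * (ennreal (norm (F z) powr p * w z) + ennreal (norm (G z) powr p * w z))"
      by (simp add: w_def)
  qed
  also have "\<dots> = ennreal (2 powr p) * (fock_integral p \<alpha> m F + fock_integral p \<alpha> m G)"
    using fock_integrand_measurable[OF F p m] fock_integrand_measurable[OF G p m]
    by (simp add: nn_integral_cmult nn_integral_add fock_integral_def w_def)
  finally show ?thesis .
qed

lemma fock_space_continuous: "f \<in> fock_space p \<alpha> m \<Longrightarrow> continuous_on UNIV f"
  by (simp add: fock_space_def holomorphic_on_imp_continuous_on)

lemma fock_space_finite: "f \<in> fock_space p \<alpha> m \<Longrightarrow> fock_integral p \<alpha> m f < \<infinity>"
  by (simp add: fock_space_def)

lemma fock_space_scale_diff:
  assumes f: "f \<in> fock_space p \<alpha> m" and g: "g \<in> fock_space p \<alpha> m" and "p > 0" and "m > 0"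
  shows "(\<lambda>z. c * f z - g z) \<in> fock_space p \<alpha> m"
proof -
  have "continuous_on UNIV (\<lambda>z. c * f z)"
    using fock_space_continuous[OF f] by (intro continuous_intros)
  then have "fock_integral p \<alpha> m (\<lambda>z. c * f z - g z) \<le>
      ennreal (2 powr p) * (ennreal (norm c powr p) * fock_integral p \<alpha> m f + fock_integral p \<alpha> m g)"
    using fock_integral_diff_le[of "\<lambda>z. c * f z" g p m \<alpha>] fock_integral_scale[of f p m \<alpha> c]
      fock_space_continuous[OF f] fock_space_continuous[OF g] assms by simp
  also have "\<dots> < \<infinity>"
    using fock_space_finite[OF f] fock_space_finite[OF g] by (simp add: ennreal_mult_less_top)
  finally show ?thesis
    using f g by (auto simp: fock_space_def intro!: holomorphic_intros)
qed

lemma fock_integral_pos: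
  fixes f :: "complex \<Rightarrow> complex"
  assumes "continuous_on UNIV f" and "\<And>z. f z \<noteq> 0" and "p > 0" and "m > 0"
  shows "fock_integral p \<alpha> m f > 0"
proof -
  let ?h = "\<lambda>z. ennreal (norm (f z) powr p * exp (- p * \<alpha> * norm z powr m))"
  have "?h z \<noteq> 0" for z
    using assms(2)[of z] by simp
  then have "{z \<in> space lborel. ?h z \<noteq> 0} = UNIV"
    by auto
  have "(\<integral>\<^sup>+ z. ?h z \<partial>lborel) \<noteq> 0"
  proof
    assume "(\<integral>\<^sup>+ z. ?h z \<partial>lborel) = 0"
    then have "AE z in lborel. ?h z = 0"
      using fock_integrand_measurable[OF assms(1,3,4)] by (simp add: nn_integral_0_iff_AE)
    then have "emeasure lborel {z \<in> space lborel. ?h z \<noteq> 0} = 0" by (rule AE_E2)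
    with \<open>{z \<in> space lborel. ?h z \<noteq> 0} = UNIV\<close> show False by simp
  qed
  then show ?thesis by (simp add: fock_integral_def zero_less_iff_neq_zero)
qed

lemma fock_norm_le_of_integral_le:
  assumes "fock_integral p \<alpha> m F \<le> ennreal c * fock_integral p \<alpha> m f"
    and "fock_integral p \<alpha> m f < \<infinity>" and "c \<ge> 0" and "p > 0"
  shows "fock_norm p \<alpha> m F \<le> c powr (1/p) * fock_norm p \<alpha> m f"
proof -
  have "enn2real (fock_integral p \<alpha> m F) \<le> enn2real (ennreal c * fock_integral p \<alpha> m f)"
    using assms by (intro enn2real_mono) (auto simp: ennreal_mult_less_top)
  also have "\<dots> = c * enn2real (fock_integral p \<alpha> m f)" using assms by (simp add: enn2real_mult)
  finally have "enn2real (fock_integral p \<alpha> m F) powr (1/p) \<le> (c * enn2real (fock_integral p \<alpha> m f)) powr (1/p)"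
    using assms by (intro powr_mono2) auto
  then show ?thesis
    unfolding fock_norm_def using assms by (simp add: powr_mult)
qed

text \<open>\<open>fock_norm\<close> is \<open>0\<close> when the integral is infinite, hence the finiteness hypotheses.\<close>

lemma fock_integral_le_of_norm_le:
  assumes "fock_norm p \<alpha> m F \<le> e * fock_norm p \<alpha> m f"
    and "fock_integral p \<alpha> m F < \<infinity>" and "fock_integral p \<alpha> m f < \<infinity>" and "e \<ge> 0" and "p > 0"
  shows "fock_integral p \<alpha> m F \<le> ennreal (e powr p) * fock_integral p \<alpha> m f"
proof -
  define x y where "x = enn2real (fock_integral p \<alpha> m F)" and "y = enn2real (fock_integral p \<alpha> m f)"
  have "x \<ge> 0" "y \<ge> 0" by (simp_all add: x_def y_def)
  have "x = (x powr (1/p)) powr p" using \<open>x \<ge> 0\<close> assms by (simp add: powr_powr)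
  also have "\<dots> \<le> (e * y powr (1/p)) powr p"
    using assms by (intro powr_mono2) (auto simp: x_def y_def fock_norm_def)
  also have "\<dots> = e powr p * y" using \<open>y \<ge> 0\<close> assms by (simp add: powr_mult powr_powr)
  finally have "ennreal x \<le> ennreal (e powr p) * ennreal y"
    using \<open>y \<ge> 0\<close> by (subst ennreal_mult[symmetric]) (auto intro: ennreal_leI)
  then show ?thesis using assms by (simp add: x_def y_def)
qed

section \<open>Geometric decay of the powers of \<open>D\<close> for slowly growing weights\<close>

lemma Dop_eq_deriv: "Dop = deriv"
  by (rule ext) (simp add: Dop_def)

lemma exp_neg_norm_powr_shift_le:
  fixes z w :: "'a::real_normed_vector" and c m :: real
  assumes "c \<ge> 0" and "0 < m" "m \<le> 1"
  shows "exp (- c * norm z powr m) \<le> exp (c * norm w powr m) * exp (- c * norm (z + w) powr m)"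
proof -
  have "norm (z + w) powr m \<le> (norm z + norm w) powr m"
    using assms by (intro powr_mono2 norm_triangle_ineq) auto
  also have "\<dots> \<le> norm z powr m + norm w powr m"
    using assms by (intro powr_add_le_add_powr) auto
  finally have "c * norm (z + w) powr m \<le> c * norm z powr m + c * norm w powr m"
    using assms by (simp add: mult_left_mono flip: distrib_left)
  then show ?thesis by (simp flip: exp_add)
qed

lemma nn_integral_lborel_translate:
  fixes H :: "'a::euclidean_space \<Rightarrow> ennreal"
  assumes [measurable]: "H \<in> borel_measurable borel"
  shows "(\<integral>\<^sup>+ z. H (z + c) \<partial>lborel) = (\<integral>\<^sup>+ z. H z \<partial>lborel)"
proof -
  have "(\<integral>\<^sup>+ z. H z \<partial>lborel) = (\<integral>\<^sup>+ z. H z \<partial>(distr lborel borel ((+) c)))"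
    by (simp add: lborel_distr_plus)
  also have "\<dots> = (\<integral>\<^sup>+ z. H (c + z) \<partial>lborel)"
    by (rule nn_integral_distr) auto
  finally show ?thesis by (simp add: add.commute)
qed

lemma measurable_translates:
  fixes H :: "'a::euclidean_space \<Rightarrow> ennreal" and e :: "real \<Rightarrow> 'a"
  assumes [measurable]: "H \<in> borel_measurable borel" and e: "continuous_on UNIV e"
  shows "(\<lambda>(z, t). H (z + e t) * indicator {0..1} t) \<in> borel_measurable (lborel \<Otimes>\<^sub>M lborel)"
proof -
  have "(\<lambda>x::'a \<times> real. fst x + e (snd x)) \<in> borel_measurable borel"
    by (intro borel_measurable_continuous_onI continuous_intros continuous_on_compose2[OF e]) auto
  moreover have "(\<lambda>x::'a \<times> real. snd x) \<in> borel_measurable borel"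
    by (intro borel_measurable_continuous_onI continuous_intros)
  ultimately have "(\<lambda>x::'a \<times> real. H (fst x + e (snd x)) * indicator {0..1::real} (snd x)) \<in> borel_measurable borel"
    by measurable
  then show ?thesis
    unfolding lborel_prod measurable_lborel1 by (simp add: case_prod_beta')
qed

lemma nn_integral_mean_of_translates:
  fixes H :: "'a::euclidean_space \<Rightarrow> ennreal" and e :: "real \<Rightarrow> 'a"
  assumes H: "H \<in> borel_measurable borel" and e: "continuous_on UNIV e"
  shows "(\<integral>\<^sup>+ z. (\<integral>\<^sup>+ t. H (z + e t) * indicator {0..1} t \<partial>lborel) \<partial>lborel) = (\<integral>\<^sup>+ z. H z \<partial>lborel)"
proof -
  have "(\<integral>\<^sup>+ z. (\<integral>\<^sup>+ t. H (z + e t) * indicator {0..1} t \<partial>lborel) \<partial>lborel) =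
      (\<integral>\<^sup>+ t. (\<integral>\<^sup>+ z. H (z + e t) * indicator {0..1} t \<partial>lborel) \<partial>lborel)"
    using lborel_pair.Fubini'[OF measurable_translates[OF H e]] by simp
  also have "\<dots> = (\<integral>\<^sup>+ t. (\<integral>\<^sup>+ z. H z \<partial>lborel) * indicator {0..1::real} t \<partial>lborel)"
    using H by (simp add: nn_integral_multc nn_integral_lborel_translate)
  also have "\<dots> = (\<integral>\<^sup>+ z. H z \<partial>lborel)" by (simp add: nn_integral_cmult_indicator)
  finally show ?thesis .
qed

lemma higher_deriv_fock_integrand_le:
  fixes f :: "complex \<Rightarrow> complex"
  assumes hol: "f holomorphic_on UNIV" and R: "R > 0" and p: "p \<ge> 1" and a: "\<alpha> > 0"
    and m: "0 < m" "m \<le> 1"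
  defines "e t \<equiv> of_real R * exp (2 * of_real pi * \<i> * of_real t)"
  shows "ennreal (norm ((deriv ^^ k) f z) powr p * exp (- p * \<alpha> * norm z powr m)) \<le>
    ennreal ((fact k / R^k) powr p * exp (p * \<alpha> * R powr m)) *
    (\<integral>\<^sup>+ t. ennreal (norm (f (z + e t)) powr p * exp (- p * \<alpha> * norm (z + e t) powr m)) *
        indicator {0..1} t \<partial>lborel)"
proof -
  define w where "w z = exp (- p * \<alpha> * norm z powr m)" for z :: complex
  define C where "C = ennreal ((fact k / R^k) powr p)"
  define E where "E = exp (p * \<alpha> * R powr m)"
  have cf: "continuous_on UNIV f" using hol holomorphic_on_imp_continuous_on by blast
  have ce: "continuous_on UNIV e" unfolding e_def by (intro continuous_intros)
  have shift: "w z \<le> E * w (z + e t)" for t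
    using exp_neg_norm_powr_shift_le[of "p * \<alpha>" m z "e t"] p a m R
    by (simp add: w_def E_def e_def norm_mult norm_exp)
  have "continuous_on UNIV (\<lambda>t. norm (f (z + e t)) powr p)"
    using p by (intro continuous_on_powr' continuous_intros continuous_on_compose2[OF cf] ce) auto
  from borel_measurable_continuous_onI[OF this]
  have ft: "(\<lambda>t. ennreal (norm (f (z + e t)) powr p) * indicator {0..1} t) \<in> borel_measurable lborel"
    by measurable
  have "continuous_on UNIV (\<lambda>t. norm (f (z + e t)) powr p * w (z + e t))"
    using p m unfolding w_def
    by (intro continuous_on_powr' continuous_intros continuous_on_compose2[OF cf] ce) auto
  from borel_measurable_continuous_onI[OF this]
  have Ht: "(\<lambda>t. ennreal (norm (f (z + e t)) powr p * w (z + e t)) * indicator {0..1} t) \<in> borel_measurable lborel"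
    by measurable
  have "ennreal (norm ((deriv ^^ k) f z) powr p * w z) = ennreal (norm ((deriv ^^ k) f z) powr p) * ennreal (w z)"
    by (simp add: w_def ennreal_mult)
  also have "\<dots> \<le> C * (\<integral>\<^sup>+ t. ennreal (norm (f (z + e t)) powr p) * indicator {0..1} t \<partial>lborel) * ennreal (w z)"
    unfolding C_def e_def by (intro mult_right_mono higher_deriv_powr_le_circle_mean[OF hol R p]) auto
  also have "\<dots> = C * (\<integral>\<^sup>+ t. ennreal (norm (f (z + e t)) powr p) * indicator {0..1} t * ennreal (w z) \<partial>lborel)"
    using nn_integral_multc[OF ft, of "ennreal (w z)"] by (simp add: mult.assoc)
  also have "\<dots> \<le> C * (\<integral>\<^sup>+ t. ennreal E * (ennreal (norm (f (z + e t)) powr p * w (z + e t)) * indicator {0..1} t) \<partial>lborel)"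
  proof (intro mult_left_mono nn_integral_mono)
    fix t
    have "ennreal (norm (f (z + e t)) powr p) * ennreal (w z) \<le> ennreal (norm (f (z + e t)) powr p) * ennreal (E * w (z + e t))"
      by (intro mult_left_mono ennreal_leI shift) auto
    also have "\<dots> = ennreal E * ennreal (norm (f (z + e t)) powr p * w (z + e t))"
      by (simp add: ennreal_mult[symmetric] E_def w_def mult_ac)
    finally show "ennreal (norm (f (z + e t)) powr p) * indicator {0..1} t * ennreal (w z) \<le>
        ennreal E * (ennreal (norm (f (z + e t)) powr p * w (z + e t)) * indicator {0..1} t)"
      by (simp add: mult_ac split: split_indicator)
  qed auto
  also have "\<dots> = C * ennreal E * (\<integral>\<^sup>+ t. ennreal (norm (f (z + e t)) powr p * w (z + e t)) * indicator {0..1} t \<partial>lborel)"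
    using Ht by (simp add: nn_integral_cmult mult.assoc)
  finally show ?thesis
    unfolding C_def E_def w_def by (simp add: ennreal_mult mult_ac)
qed

lemma fock_integral_higher_deriv_le:
  fixes f :: "complex \<Rightarrow> complex"
  assumes hol: "f holomorphic_on UNIV" and R: "R > 0" and p: "p \<ge> 1" and a: "\<alpha> > 0"
    and m: "0 < m" "m \<le> 1"
  shows "fock_integral p \<alpha> m ((deriv ^^ k) f) \<le>
     ennreal ((fact k / R^k) powr p * exp (p * \<alpha> * R powr m)) * fock_integral p \<alpha> m f"
proof -
  define e where "e t = of_real R * exp (2 * of_real pi * \<i> * of_real t)" for t :: real
  define H where "H z = ennreal (norm (f z) powr p * exp (- p * \<alpha> * norm z powr m))" for z
  define c where "c = ennreal ((fact k / R^k) powr p * exp (p * \<alpha> * R powr m))"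
  have Hm: "H \<in> borel_measurable borel"
    unfolding H_def using hol p m by (intro fock_integrand_measurable holomorphic_on_imp_continuous_on) auto
  have ce: "continuous_on UNIV e" unfolding e_def by (intro continuous_intros)
  have "fock_integral p \<alpha> m ((deriv ^^ k) f) \<le> (\<integral>\<^sup>+ z. c * (\<integral>\<^sup>+ t. H (z + e t) * indicator {0..1} t \<partial>lborel) \<partial>lborel)"
    unfolding fock_integral_def c_def H_def e_def
    by (intro nn_integral_mono higher_deriv_fock_integrand_le[OF hol R p a m])
  also have "\<dots> = c * (\<integral>\<^sup>+ z. (\<integral>\<^sup>+ t. H (z + e t) * indicator {0..1} t \<partial>lborel) \<partial>lborel)"
    using lborel.borel_measurable_nn_integral[OF measurable_translates[OF Hm ce]]
    by (simp add: nn_integral_cmult)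
  also have "\<dots> = c * fock_integral p \<alpha> m f"
    unfolding nn_integral_mean_of_translates[OF Hm ce]
    by (simp add: fock_integral_def H_def[abs_def])
  finally show ?thesis by (simp add: c_def)
qed

lemma fact_div_power_exp_le_geometric:
  fixes \<alpha> m :: real
  assumes a: "\<alpha> > 0" and m: "0 < m" "m \<le> 1" and c: "m < 1 \<or> \<alpha> < 1"
  shows "\<exists>A \<gamma>. A > 0 \<and> 0 < \<gamma> \<and> \<gamma> < 1 \<and>
           (\<forall>k\<ge>1. \<exists>R>0. fact k / R^k * exp (\<alpha> * R powr m) \<le> A * \<gamma>^k)"
proof -
  obtain \<beta> K where b: "0 < \<beta>" "\<beta> < 1" and bk: "\<And>R. R \<ge> 0 \<Longrightarrow> \<alpha> * R powr m \<le> \<beta> * R + K"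
    using powr_le_linear_plus_const[OF a m c] by blast
  define \<delta> where "\<delta> = (1 - \<beta>) / (2 * \<beta>)"
  have d: "\<delta> > 0" using b by (simp add: \<delta>_def)
  define \<gamma> where "\<gamma> = (1 + \<delta>) * \<beta>"
  have g: "\<gamma> = (1 + \<beta>) / 2" using b by (simp add: \<gamma>_def \<delta>_def field_simps)
  define A where "A = exp (K + 1) / \<delta>"
  have "\<exists>R>0. fact k / R^k * exp (\<alpha> * R powr m) \<le> A * \<gamma>^k" if k: "k \<ge> 1" for k :: nat
  proof -
    define R where "R = real k / \<beta>"
    have R: "R > 0" using k b by (simp add: R_def)
    have kb: "\<beta> * R = real k" using b by (simp add: R_def)
    have Rk: "R ^ k = real k ^ k / \<beta> ^ k" by (simp add: R_def power_divide)
    have kpos: "real k ^ k > 0" using k by simp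
    have "fact k / R^k * exp (\<alpha> * R powr m) \<le> fact k / R^k * exp (\<beta> * R + K)"
      using bk[of R] R by (intro mult_left_mono) auto
    also have "\<dots> = (fact k * exp (real k)) * \<beta> ^ k / real k ^ k * exp K"
      unfolding Rk kb[symmetric] using b kpos by (simp add: exp_add field_simps)
    also have "\<dots> \<le> (exp 1 * real k * real k ^ k) * \<beta> ^ k / real k ^ k * exp K"
      using fact_mult_exp_le[OF k] b kpos by (intro mult_right_mono divide_right_mono) auto
    also have "\<dots> = exp (K + 1) * real k * \<beta> ^ k"
      using kpos by (simp add: exp_add field_simps)
    also have "\<dots> \<le> exp (K + 1) * ((1 + \<delta>) ^ k / \<delta>) * \<beta> ^ k"
    proof -
      have "1 + real k * \<delta> \<le> (1 + \<delta>) ^ k" using Bernoulli_inequality[of \<delta> k] d by simp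
      then have "real k \<le> (1 + \<delta>) ^ k / \<delta>" using d by (simp add: field_simps)
      then show ?thesis using b by (intro mult_right_mono mult_left_mono) auto
    qed
    also have "\<dots> = A * \<gamma> ^ k" by (simp add: A_def \<gamma>_def power_mult_distrib)
    finally show ?thesis using R by blast
  qed
  moreover have "A > 0" using d by (simp add: A_def)
  ultimately show ?thesis using b by (intro exI[of _ A] exI[of _ \<gamma>]) (auto simp: g)
qed

lemma fock_integral_Dop_power_le_geometric:
  fixes p \<alpha> m :: real
  assumes p: "p \<ge> 1" and a: "\<alpha> > 0" and m: "0 < m" "m \<le> 1" and c: "m < 1 \<or> \<alpha> < 1"
  obtains A \<gamma> where "A > 0" "0 < \<gamma>" "\<gamma> < 1"
    "\<And>f k. f holomorphic_on UNIV \<Longrightarrow> k \<ge> 1 \<Longrightarrow>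
        fock_integral p \<alpha> m ((Dop ^^ k) f) \<le> ennreal (A * \<gamma>^k) * fock_integral p \<alpha> m f"
proof -
  obtain A \<gamma> where A: "A > 0" and g: "0 < \<gamma>" "\<gamma> < 1"
    and b: "\<And>k. k \<ge> 1 \<Longrightarrow> \<exists>R>0. fact k / R^k * exp (\<alpha> * R powr m) \<le> A * \<gamma>^k"
    using fact_div_power_exp_le_geometric[OF a m c] by blast
  have "fock_integral p \<alpha> m ((Dop ^^ k) f) \<le> ennreal (A powr p * (\<gamma> powr p)^k) * fock_integral p \<alpha> m f"
    if hol: "f holomorphic_on UNIV" and k: "k \<ge> 1" for f k
  proof -
    obtain R where R: "R > 0" and bR: "fact k / R^k * exp (\<alpha> * R powr m) \<le> A * \<gamma>^k"
      using b[OF k] by blast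
    have "(fact k / R^k * exp (\<alpha> * R powr m)) powr p = (fact k / R^k) powr p * exp (\<alpha> * R powr m * p)"
      by (simp only: powr_mult exp_powr_real)
    then have "(fact k / R^k) powr p * exp (p * \<alpha> * R powr m) = (fact k / R^k * exp (\<alpha> * R powr m)) powr p"
      by (simp add: mult_ac)
    also have "\<dots> \<le> (A * \<gamma>^k) powr p"
      using bR R p by (intro powr_mono2) auto
    also have "\<dots> = A powr p * (\<gamma> powr p)^k"
      using g by (simp add: powr_mult powr_realpow[symmetric] powr_powr mult_ac)
    finally have "ennreal ((fact k / R^k) powr p * exp (p * \<alpha> * R powr m)) * fock_integral p \<alpha> m f
        \<le> ennreal (A powr p * (\<gamma> powr p)^k) * fock_integral p \<alpha> m f"
      by (intro mult_right_mono ennreal_leI) auto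
    then show ?thesis
      unfolding Dop_eq_deriv using fock_integral_higher_deriv_le[OF hol R p a m] by (rule order_trans[rotated])
  qed
  moreover have "\<gamma> powr p < 1" using powr_less_mono2[of p \<gamma> 1] g p by simp
  ultimately show ?thesis using A g by (intro that[of "A powr p" "\<gamma> powr p"]) auto
qed

section \<open>Power boundedness and uniform mean ergodicity under geometric decay\<close>

lemma D_power_bounded_if_geometric_decay:
  assumes p: "p > 0" and A: "A > 0" and \<gamma>: "0 < \<gamma>" "\<gamma> \<le> 1"
    and decay: "\<And>f k. f holomorphic_on UNIV \<Longrightarrow> k \<ge> 1 \<Longrightarrow>
        fock_integral p \<alpha> m ((Dop ^^ k) f) \<le> ennreal (A * \<gamma>^k) * fock_integral p \<alpha> m f"
  shows "D_power_bounded p \<alpha> m"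
  unfolding D_power_bounded_def
proof (intro exI[of _ "max 1 (A powr (1/p))"] allI ballI)
  fix n f assume f: "f \<in> fock_space p \<alpha> m"
  show "fock_norm p \<alpha> m ((Dop ^^ n) f) \<le> max 1 (A powr (1/p)) * fock_norm p \<alpha> m f"
  proof (cases "n = 0")
    case True
    then show ?thesis using fock_norm_nonneg[of p \<alpha> m f] by (simp add: mult_le_cancel_right1)
  next
    case False
    have "fock_norm p \<alpha> m ((Dop ^^ n) f) \<le> (A * \<gamma>^n) powr (1/p) * fock_norm p \<alpha> m f"
      using f False A \<gamma> p
      by (intro fock_norm_le_of_integral_le decay) (auto simp: fock_space_def)
    also have "\<dots> \<le> A powr (1/p) * fock_norm p \<alpha> m f"
      using A \<gamma> p
      by (intro mult_right_mono fock_norm_nonneg powr_mono2)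
        (auto simp: power_le_one mult_le_cancel_left1)
    also have "\<dots> \<le> max 1 (A powr (1/p)) * fock_norm p \<alpha> m f"
      by (intro mult_right_mono fock_norm_nonneg) auto
    finally show ?thesis .
  qed
qed

lemma norm_cesaro_D_powr_le:
  assumes "n \<ge> 1" and "p \<ge> 1"
  shows "norm (cesaro_D n f z) powr p \<le> (\<Sum>k=1..n. norm ((Dop ^^ k) f z) powr p) / n"
proof -
  have "norm (cesaro_D n f z) \<le> (\<Sum>k=1..n. norm ((Dop ^^ k) f z)) / card {1..n}"
    using assms norm_sum[of "\<lambda>k. (Dop ^^ k) f z" "{1..n}"]
    by (auto simp: cesaro_D_def norm_mult norm_divide divide_right_mono)
  then have "norm (cesaro_D n f z) powr p \<le> ((\<Sum>k=1..n. norm ((Dop ^^ k) f z)) / card {1..n}) powr p"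
    using assms by (intro powr_mono2) auto
  also have "\<dots> \<le> (\<Sum>k=1..n. norm ((Dop ^^ k) f z) powr p) / card {1..n}"
    using assms by (intro powr_mean_le_mean_powr) auto
  finally show ?thesis by simp
qed

lemma sum_power_le_inverse_one_minus:
  fixes \<gamma> :: real
  assumes "0 \<le> \<gamma>" "\<gamma> < 1"
  shows "(\<Sum>k=1..n. \<gamma>^k) \<le> 1 / (1 - \<gamma>)"
proof -
  have "(\<Sum>k=1..n. \<gamma>^k) \<le> (\<Sum>k<Suc n. \<gamma>^k)"
    using assms by (intro sum_mono2) auto
  also have "\<dots> = (1 - \<gamma>^Suc n) / (1 - \<gamma>)" using assms by (subst sum_gp_strict) simp
  also have "\<dots> \<le> 1 / (1 - \<gamma>)" using assms by (intro divide_right_mono) auto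
  finally show ?thesis .
qed

lemma fock_integral_cesaro_le:
  assumes p: "p \<ge> 1" and m: "m > 0" and A: "A > 0" and \<gamma>: "0 < \<gamma>" "\<gamma> < 1"
    and decay: "\<And>f k. f holomorphic_on UNIV \<Longrightarrow> k \<ge> 1 \<Longrightarrow>
        fock_integral p \<alpha> m ((Dop ^^ k) f) \<le> ennreal (A * \<gamma>^k) * fock_integral p \<alpha> m f"
    and f: "f \<in> fock_space p \<alpha> m" and n: "n \<ge> 1"
  shows "fock_integral p \<alpha> m (cesaro_D n f) \<le> ennreal (A / (1 - \<gamma>) / n) * fock_integral p \<alpha> m f"
proof -
  define w where "w z = exp (- p * \<alpha> * norm z powr m)" for z :: complex
  define G where "G k z = norm ((Dop ^^ k) f z) powr p * w z" for k z
  have hol: "f holomorphic_on UNIV" using f by (simp add: fock_space_def)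
  have Gm: "(\<lambda>z. ennreal (G k z)) \<in> borel_measurable lborel" for k
  proof -
    have "continuous_on UNIV ((Dop ^^ k) f)" unfolding Dop_eq_deriv
      by (intro holomorphic_on_imp_continuous_on holomorphic_higher_deriv hol) auto
    then have "(\<lambda>z. ennreal (norm ((Dop ^^ k) f z) powr p * exp (- p * \<alpha> * norm z powr m))) \<in> borel_measurable borel"
      using p m by (intro fock_integrand_measurable) auto
    then show ?thesis by (simp add: G_def w_def)
  qed
  have G0: "G k z \<ge> 0" for k z by (simp add: G_def w_def)
  have pointwise: "ennreal (norm (cesaro_D n f z) powr p * w z) \<le> ennreal (1 / n) * (\<Sum>k=1..n. ennreal (G k z))" for z
  proof -
    have "norm (cesaro_D n f z) powr p * w z \<le> (\<Sum>k=1..n. norm ((Dop ^^ k) f z) powr p) / n * w z"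
      using norm_cesaro_D_powr_le[OF n p] by (intro mult_right_mono) (auto simp: w_def)
    also have "\<dots> = 1 / n * (\<Sum>k=1..n. G k z)"
      by (simp add: G_def sum_distrib_right)
    finally show ?thesis
      using G0 by (simp add: ennreal_mult[symmetric] sum_nonneg ennreal_leI)
  qed
  have geometric: "(\<Sum>k=1..n. A * \<gamma>^k) \<le> A / (1 - \<gamma>)"
    using sum_power_le_inverse_one_minus[of \<gamma> n] A \<gamma>
    by (simp add: sum_distrib_left[symmetric] mult_left_mono divide_inverse)
  have "fock_integral p \<alpha> m (cesaro_D n f) \<le> (\<integral>\<^sup>+ z. ennreal (1 / n) * (\<Sum>k=1..n. ennreal (G k z)) \<partial>lborel)"
    unfolding fock_integral_def using pointwise by (intro nn_integral_mono) (simp add: w_def)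
  also have "\<dots> = ennreal (1 / n) * (\<Sum>k=1..n. \<integral>\<^sup>+ z. ennreal (G k z) \<partial>lborel)"
    using Gm by (simp add: nn_integral_cmult nn_integral_sum)
  also have "\<dots> \<le> ennreal (1 / n) * (\<Sum>k=1..n. ennreal (A * \<gamma>^k) * fock_integral p \<alpha> m f)"
    using decay[OF hol] unfolding fock_integral_def G_def w_def
    by (intro mult_left_mono sum_mono) auto
  also have "\<dots> = ennreal (1 / n) * ennreal (\<Sum>k=1..n. A * \<gamma>^k) * fock_integral p \<alpha> m f"
    using A \<gamma> by (simp add: sum_distrib_right[symmetric] mult.assoc)
  also have "\<dots> \<le> ennreal (1 / n) * ennreal (A / (1 - \<gamma>)) * fock_integral p \<alpha> m f"
    using geometric by (intro mult_right_mono mult_left_mono ennreal_leI) auto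
  also have "\<dots> = ennreal (A / (1 - \<gamma>) / n) * fock_integral p \<alpha> m f"
    using A \<gamma> by (simp add: ennreal_mult[symmetric] mult.commute[of "real n"])
  finally show ?thesis .
qed

lemma D_uniformly_mean_ergodic_if_geometric_decay:
  assumes p: "p \<ge> 1" and m: "m > 0" and A: "A > 0" and \<gamma>: "0 < \<gamma>" "\<gamma> < 1"
    and decay: "\<And>f k. f holomorphic_on UNIV \<Longrightarrow> k \<ge> 1 \<Longrightarrow>
        fock_integral p \<alpha> m ((Dop ^^ k) f) \<le> ennreal (A * \<gamma>^k) * fock_integral p \<alpha> m f"
  shows "D_uniformly_mean_ergodic p \<alpha> m"
  unfolding D_uniformly_mean_ergodic_def
proof (intro exI[of _ "\<lambda>f z. 0"] conjI ballI allI impI)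
  show "(\<lambda>z. 0) \<in> fock_space p \<alpha> m" for f :: "complex \<Rightarrow> complex"
    using p by (simp add: fock_space_def fock_integral_def)
next
  fix \<epsilon> :: real assume "\<epsilon> > 0"
  define B where "B = A / (1 - \<gamma>)"
  have "B > 0" using A \<gamma> by (simp add: B_def)
  have "fock_norm p \<alpha> m (cesaro_D n f) \<le> \<epsilon> * fock_norm p \<alpha> m f"
    if n: "n \<ge> nat \<lceil>B / \<epsilon> powr p\<rceil> + 1" and f: "f \<in> fock_space p \<alpha> m" for n f
  proof -
    have "fock_norm p \<alpha> m (cesaro_D n f) \<le> (B / n) powr (1/p) * fock_norm p \<alpha> m f"
      using fock_integral_cesaro_le[OF p m A \<gamma> decay f] n f \<open>B > 0\<close> p
        divide_nonneg_nonneg[of B n]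
      by (intro fock_norm_le_of_integral_le) (auto simp: B_def fock_space_def)
    also have "(B / n) powr (1/p) \<le> (\<epsilon> powr p) powr (1/p)"
    proof -
      have "B / \<epsilon> powr p \<le> real (nat \<lceil>B / \<epsilon> powr p\<rceil> + 1)" by linarith
      also have "\<dots> \<le> real n" using n by (simp only: of_nat_le_iff)
      finally have "B / n \<le> \<epsilon> powr p"
        using n \<open>\<epsilon> > 0\<close> by (simp add: field_simps)
      then show ?thesis using \<open>B > 0\<close> p by (intro powr_mono2) auto
    qed
    also have "(\<epsilon> powr p) powr (1/p) = \<epsilon>"
      using \<open>\<epsilon> > 0\<close> p by (simp add: powr_powr)
    finally show ?thesis by (simp add: mult_right_mono fock_norm_nonneg)
  qed
  then show "\<forall>\<^sub>F n in sequentially. \<forall>f\<in>fock_space p \<alpha> m.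
      fock_norm p \<alpha> m (\<lambda>z. cesaro_D n f z - (\<lambda>z. 0) z) \<le> \<epsilon> * fock_norm p \<alpha> m f"
    unfolding eventually_sequentially by auto
qed

section \<open>Eigenfunctions of \<open>D\<close> for fast growing weights\<close>

lemma summable_exp_neg_mult_square:
  fixes c :: real
  assumes c: "c > 0"
  shows "summable (\<lambda>k. exp (- c * real k) * (real k + 1) ^ 2)"
proof (rule summable_comparison_test[OF exI[of _ 0]])
  define d where "d = min 1 (c / 4)"
  have d: "d > 0" "d \<le> 1" "d \<le> c / 4" using c by (auto simp: d_def)
  have "exp (- c * real k) * (real k + 1) ^ 2 \<le> 1 / d^2 * exp (- c / 2) ^ k" for k
  proof -
    have "d * (real k + 1) \<le> 1 + c * real k / 4"
      using d mult_right_mono[of d "c / 4" "real k"] by (simp add: algebra_simps)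
    also have "\<dots> \<le> exp (c * real k / 4)" using exp_ge_add_one_self[of "c * real k / 4"] by simp
    finally have "(d * (real k + 1))^2 \<le> exp (c * real k / 4) ^ 2"
      using d by (intro power_mono) auto
    also have "\<dots> = exp (c * real k / 2)" by (simp add: power2_eq_square exp_add[symmetric])
    finally have "(real k + 1)^2 \<le> exp (c * real k / 2) / d^2"
      using d by (subst pos_le_divide_eq) (auto simp: power_mult_distrib mult.commute)
    then have "exp (- c * real k) * (real k + 1) ^ 2 \<le> exp (- c * real k) * (exp (c * real k / 2) / d^2)"
      by (intro mult_left_mono) auto
    also have "\<dots> = 1 / d^2 * exp (- c * real k / 2)"
      by (simp add: field_simps exp_add[symmetric])
    also have "exp (- c * real k / 2) = exp (- c / 2) ^ k"
      by (simp add: exp_of_nat_mult[symmetric] mult_ac)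
    finally show ?thesis .
  qed
  then show "\<forall>k\<ge>0. norm (exp (- c * real k) * (real k + 1) ^ 2) \<le> 1 / d^2 * exp (- c / 2) ^ k"
    by simp
  show "summable (\<lambda>k. 1 / d^2 * exp (- c / 2) ^ k)"
    using c by (intro summable_mult summable_geometric) auto
qed

lemma nn_integral_exp_neg_norm_finite:
  fixes c :: real
  assumes c: "c > 0"
  shows "(\<integral>\<^sup>+ z. ennreal (exp (- c * norm (z::complex))) \<partial>lborel) < \<infinity>"
proof -
  define g where "g k z = ennreal (exp (- c * real k)) * indicator (ball (0::complex) (real k + 1)) z" for k z
  have gm: "g k \<in> borel_measurable lborel" for k
  proof -
    have [measurable]: "ball (0::complex) (real k + 1) \<in> sets borel" by simp
    show ?thesis unfolding g_def by measurable
  qed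
  have "ennreal (exp (- c * norm z)) \<le> (\<Sum>k. g k z)" for z :: complex
  proof -
    define j where "j = nat \<lfloor>norm z\<rfloor>"
    have "real j = of_int \<lfloor>norm z\<rfloor>" unfolding j_def by simp
    then have "real j \<le> norm z" "norm z < real j + 1"
      using floor_correct[of "norm z"] by linarith+
    then have "ennreal (exp (- c * norm z)) \<le> g j z"
      unfolding g_def using c by (auto intro!: ennreal_leI simp: dist_norm)
    also have "\<dots> \<le> (\<Sum>k. g k z)" using sum_le_suminf[OF summableI, of "{j}" "\<lambda>k. g k z"] by simp
    finally show ?thesis .
  qed
  then have "(\<integral>\<^sup>+ z. ennreal (exp (- c * norm (z::complex))) \<partial>lborel) \<le> (\<integral>\<^sup>+ z. (\<Sum>k. g k z) \<partial>lborel)"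
    by (intro nn_integral_mono)
  also have "\<dots> = (\<Sum>k. \<integral>\<^sup>+ z. g k z \<partial>lborel)"
    by (rule nn_integral_suminf[OF gm])
  also have "\<dots> = (\<Sum>k. ennreal (unit_ball_vol 2 * (exp (- c * real k) * (real k + 1) ^ 2)))"
    by (simp add: g_def nn_integral_cmult_indicator emeasure_ball ennreal_mult mult_ac)
  also have "\<dots> < \<infinity>"
    using ennreal_suminf_neq_top[OF summable_mult[OF summable_exp_neg_mult_square[OF c]]]
    by (simp add: top.not_eq_extremum)
  finally show ?thesis .
qed

lemma fock_integrand_exp_mult_le:
  fixes p \<alpha> m l :: real
  assumes p: "p \<ge> 1" and a: "\<alpha> > 0" and fast: "1 < m \<or> (m = 1 \<and> 1 \<le> \<alpha>)"
    and l: "0 \<le> l" "l < 1"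
  obtains c K where "c > 0"
    "\<And>z::complex. norm (exp (of_real l * z)) powr p * exp (- p * \<alpha> * norm z powr m) \<le> exp K * exp (- c * norm z)"
proof -
  have eq: "norm (exp (of_real l * z)) powr p * exp (- p * \<alpha> * norm z powr m) =
      exp (l * Re z * p - p * \<alpha> * norm z powr m)" for z :: complex
    by (simp add: norm_exp_eq_Re exp_powr_real exp_diff exp_minus field_simps)
  have Re_le: "l * Re z * p \<le> l * norm z * p" for z
    using l p abs_Re_le_cmod[of z] by (intro mult_right_mono mult_left_mono) auto
  show ?thesis
  proof (cases "m = 1")
    case True
    with fast have "\<alpha> \<ge> 1" by simp
    show ?thesis
    proof (rule that[of "p * (1 - l)" 0])
      show "p * (1 - l) > 0" using p l by simp
      fix z :: complex
      have "p * \<alpha> * norm z \<ge> p * norm z" using \<open>\<alpha> \<ge> 1\<close> p by (simp add: mult_right_mono)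
      then have "l * Re z * p - p * \<alpha> * norm z powr m \<le> - (p * (1 - l)) * norm z"
        using Re_le[of z] True by (simp add: algebra_simps)
      then show "norm (exp (of_real l * z)) powr p * exp (- p * \<alpha> * norm z powr m) \<le>
          exp 0 * exp (- (p * (1 - l)) * norm z)" unfolding eq by simp
    qed
  next
    case False
    with fast have "m > 1" by simp
    obtain K where K: "\<And>t. t \<ge> 0 \<Longrightarrow> t - \<alpha> * t powr m \<le> K - t"
      using linear_minus_powr_le[OF a \<open>m > 1\<close>] by blast
    show ?thesis
    proof (rule that[of p "p * K"])
      show "p > 0" using p by simp
      fix z :: complex
      have "p * (norm z - \<alpha> * norm z powr m) \<le> p * (K - norm z)"
        using K[of "norm z"] p by (intro mult_left_mono) auto
      moreover have "l * norm z * p \<le> norm z * p"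
        using l p by (intro mult_right_mono) (auto simp: mult_left_le_one_le)
      ultimately have "l * Re z * p - p * \<alpha> * norm z powr m \<le> p * K + (- p * norm z)"
        using Re_le[of z] by (simp add: algebra_simps)
      then show "norm (exp (of_real l * z)) powr p * exp (- p * \<alpha> * norm z powr m) \<le>
          exp (p * K) * exp (- p * norm z)" unfolding eq by (simp add: exp_add[symmetric])
    qed
  qed
qed

lemma exp_mult_in_fock_space:
  fixes p \<alpha> m l :: real
  assumes p: "p \<ge> 1" and a: "\<alpha> > 0" and fast: "1 < m \<or> (m = 1 \<and> 1 \<le> \<alpha>)"
    and l: "0 \<le> l" "l < 1"
  shows "(\<lambda>z. exp (of_real l * z)) \<in> fock_space p \<alpha> m"
proof -
  obtain c K where c: "c > 0" and bound: "\<And>z::complex. norm (exp (of_real l * z)) powr p *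
      exp (- p * \<alpha> * norm z powr m) \<le> exp K * exp (- c * norm z)"
    using fock_integrand_exp_mult_le[OF p a fast l] by blast
  have "fock_integral p \<alpha> m (\<lambda>z. exp (of_real l * z)) \<le>
      (\<integral>\<^sup>+ z. ennreal (exp K) * ennreal (exp (- c * norm (z::complex))) \<partial>lborel)"
    unfolding fock_integral_def
  proof (intro nn_integral_mono)
    fix z :: complex
    show "ennreal (norm (exp (of_real l * z)) powr p * exp (- p * \<alpha> * norm z powr m)) \<le>
        ennreal (exp K) * ennreal (exp (- c * norm z))"
      using bound[of z] by (subst ennreal_mult[symmetric]) (auto intro: ennreal_leI)
  qed
  also have "\<dots> = ennreal (exp K) * (\<integral>\<^sup>+ z. ennreal (exp (- c * norm (z::complex))) \<partial>lborel)"
    by (rule nn_integral_cmult) measurable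
  also have "\<dots> < \<infinity>"
    using nn_integral_exp_neg_norm_finite[OF c] by (simp add: ennreal_mult_less_top)
  finally show ?thesis
    unfolding fock_space_def by (auto intro!: holomorphic_intros)
qed

lemma Dop_power_exp: "(Dop ^^ k) (\<lambda>z. exp (a * z)) = (\<lambda>z. a ^ k * exp (a * z))"
proof (induction k)
  case 0
  then show ?case by simp
next
  case (Suc k)
  have "((\<lambda>z. a ^ k * exp (a * z)) has_field_derivative a ^ Suc k * exp (a * z)) (at z)" for z
    by (auto intro!: derivative_eq_intros simp: algebra_simps)
  then have "Dop (\<lambda>z. a ^ k * exp (a * z)) = (\<lambda>z. a ^ Suc k * exp (a * z))"
    unfolding Dop_def by (intro ext DERIV_imp_deriv)
  then show ?case using Suc by simp
qed

definition geometric_cesaro_mean :: "nat \<Rightarrow> real \<Rightarrow> real" where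
  "geometric_cesaro_mean n l = (1 / real n) * (\<Sum>k = 1..n. l ^ k)"

lemma cesaro_D_exp:
  "cesaro_D n (\<lambda>z. exp (of_real l * z)) = (\<lambda>z. of_real (geometric_cesaro_mean n l) * exp (of_real l * z))"
  unfolding cesaro_D_def geometric_cesaro_mean_def Dop_power_exp
  by (simp add: sum_distrib_right mult.assoc)

lemma geometric_cesaro_mean_ge_half:
  assumes "N \<ge> 1"
  shows "geometric_cesaro_mean N (1 - 1 / (2 * real N)) \<ge> 1/2"
proof -
  define l where "l = 1 - 1 / (2 * real N)"
  have l: "0 \<le> l" "l \<le> 1" using assms by (auto simp: l_def field_simps)
  have "1/2 = 1 + real N * (- 1 / (2 * real N))" using assms by (simp add: field_simps)
  also have "\<dots> \<le> l ^ N"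
    using assms Bernoulli_inequality[of "- 1 / (2 * real N)" N] by (simp add: l_def field_simps)
  also have "l ^ N \<le> geometric_cesaro_mean N l"
  proof -
    have "(\<Sum>k=1..N. l ^ N) \<le> (\<Sum>k=1..N. l ^ k)"
      using l by (intro sum_mono power_decreasing) auto
    then show ?thesis using assms by (simp add: geometric_cesaro_mean_def field_simps)
  qed
  finally show ?thesis by (simp add: l_def)
qed

lemma geometric_cesaro_mean_le_quarter:
  assumes "N \<ge> 1"
  shows "geometric_cesaro_mean (8 * N) (1 - 1 / (2 * real N)) \<le> 1/4"
proof -
  define l where "l = 1 - 1 / (2 * real N)"
  have l: "0 \<le> l" "l < 1" using assms by (auto simp: l_def field_simps)
  have "(\<Sum>k=1..8*N. l ^ k) \<le> 1 / (1 - l)"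
    using l by (rule sum_power_le_inverse_one_minus)
  also have "\<dots> = 2 * real N" using assms by (simp add: l_def)
  finally show ?thesis
    using assms by (simp add: geometric_cesaro_mean_def l_def field_simps)
qed

lemma less_quarter_if_powr_le:
  fixes x p :: real
  assumes "x \<ge> 0" and "p \<ge> 1" and "x powr p \<le> 2 * (1/16) powr p"
  shows "x < 1/4"
proof (rule ccontr)
  assume "\<not> x < 1/4"
  then have "(1/4) powr p \<le> x powr p" using assms by (intro powr_mono2) auto
  moreover have "2 * (1/16) powr p < (1/4) powr p"
  proof -
    have "(2::real) < 4 powr p" using assms powr_mono[of 1 p 4] by simp
    then have "2 * (1/16) powr p < 4 powr p * (1/16) powr p" by simp
    then show ?thesis by (simp add: powr_mult[symmetric])
  qed
  ultimately show False using assms by linarith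
qed

lemma scalar_multiples_apart:
  fixes f g :: "complex \<Rightarrow> complex"
  assumes p: "p \<ge> 1" and m: "m > 0" and f: "f \<in> fock_space p \<alpha> m" and g: "g \<in> fock_space p \<alpha> m"
    and pos: "fock_integral p \<alpha> m f > 0"
    and close: "\<And>c. c \<in> {a, b} \<Longrightarrow>
      fock_integral p \<alpha> m (\<lambda>z. of_real c * f z - g z) \<le> ennreal ((1/32) powr p) * fock_integral p \<alpha> m f"
  shows "\<bar>a - b\<bar> < 1/4"
proof -
  define I where "I = fock_integral p \<alpha> m f"
  define J where "J c = fock_integral p \<alpha> m (\<lambda>z. of_real c * f z - g z)" for c
  have "I < \<infinity>" using fock_space_finite[OF f] by (simp add: I_def)
  have J: "enn2real (J c) \<le> (1/32) powr p * enn2real I" "J c < \<infinity>" if "c \<in> {a, b}" for c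
  proof -
    have le: "J c \<le> ennreal ((1/32) powr p) * I" using close[OF that] by (simp add: J_def I_def)
    moreover have fin: "ennreal ((1/32) powr p) * I < top"
      using \<open>I < \<infinity>\<close> by (simp add: ennreal_mult_less_top)
    ultimately show "J c < \<infinity>" by simp
    have "enn2real (J c) \<le> enn2real (ennreal ((1/32) powr p) * I)"
      by (rule enn2real_mono[OF le fin])
    then show "enn2real (J c) \<le> (1/32) powr p * enn2real I"
      by (simp add: enn2real_mult)
  qed
  have cont: "continuous_on UNIV (\<lambda>z. of_real c * f z - g z)" for c
    using fock_space_continuous[OF f] fock_space_continuous[OF g] by (intro continuous_intros)
  have "cmod (of_real a - of_real b) = \<bar>a - b\<bar>"
    by (metis norm_of_real of_real_diff)
  moreover have "(\<lambda>z. (of_real a * f z - g z) - (of_real b * f z - g z)) = (\<lambda>z. of_real (a - b) * f z)"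
    by (simp add: algebra_simps)
  ultimately have "ennreal (\<bar>a - b\<bar> powr p) * I \<le> ennreal (2 powr p) * (J a + J b)"
    using fock_integral_diff_le[OF cont cont, of p m \<alpha> a b] fock_integral_scale[of f p m \<alpha> "of_real (a - b)"]
      fock_space_continuous[OF f] p m
    by (simp add: I_def J_def)
  then have "enn2real (ennreal (\<bar>a - b\<bar> powr p) * I) \<le> enn2real (ennreal (2 powr p) * (J a + J b))"
    using J \<open>I < \<infinity>\<close> by (intro enn2real_mono) (auto simp: ennreal_mult_less_top)
  then have "\<bar>a - b\<bar> powr p * enn2real I \<le> 2 powr p * (enn2real (J a) + enn2real (J b))"
    using J by (simp add: enn2real_mult enn2real_plus)
  also have "\<dots> \<le> 2 powr p * (2 * ((1/32) powr p * enn2real I))"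
    using J(1)[of a] J(1)[of b] by (intro mult_left_mono) auto
  also have "\<dots> = 2 * (1/16) powr p * enn2real I"
    by (simp add: powr_mult[symmetric])
  finally have "\<bar>a - b\<bar> powr p \<le> 2 * (1/16) powr p"
    using pos \<open>I < \<infinity>\<close> by (simp add: I_def enn2real_positive_iff)
  then show ?thesis using p by (intro less_quarter_if_powr_le) auto
qed

lemma not_D_uniformly_mean_ergodic:
  fixes p \<alpha> m :: real
  assumes p: "p \<ge> 1" and a: "\<alpha> > 0" and m: "m > 0" and fast: "1 < m \<or> (m = 1 \<and> 1 \<le> \<alpha>)"
  shows "\<not> D_uniformly_mean_ergodic p \<alpha> m"
proof
  assume "D_uniformly_mean_ergodic p \<alpha> m"
  then obtain P where P: "\<And>f. f \<in> fock_space p \<alpha> m \<Longrightarrow> P f \<in> fock_space p \<alpha> m"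
    and conv: "\<And>\<epsilon>. \<epsilon> > 0 \<Longrightarrow> \<forall>\<^sub>F n in sequentially. \<forall>f \<in> fock_space p \<alpha> m.
      fock_norm p \<alpha> m (\<lambda>z. cesaro_D n f z - P f z) \<le> \<epsilon> * fock_norm p \<alpha> m f"
    unfolding D_uniformly_mean_ergodic_def by blast
  obtain N0 where N0: "\<And>n f. n \<ge> N0 \<Longrightarrow> f \<in> fock_space p \<alpha> m \<Longrightarrow>
      fock_norm p \<alpha> m (\<lambda>z. cesaro_D n f z - P f z) \<le> 1/32 * fock_norm p \<alpha> m f"
    using conv[of "1/32"] unfolding eventually_sequentially by auto
  define N where "N = max N0 1"
  define l :: real where "l = 1 - 1 / (2 * real N)"
  define f where "f = (\<lambda>z::complex. exp (of_real l * z))"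
  have "N \<ge> 1" by (simp add: N_def)
  then have "0 \<le> l" "l < 1" by (auto simp: l_def field_simps)
  have f: "f \<in> fock_space p \<alpha> m"
    unfolding f_def using exp_mult_in_fock_space[OF p a fast \<open>0 \<le> l\<close> \<open>l < 1\<close>] .
  have "fock_integral p \<alpha> m (\<lambda>z. of_real (geometric_cesaro_mean n l) * f z - P f z) \<le>
      ennreal ((1/32) powr p) * fock_integral p \<alpha> m f" if "n \<ge> N0" for n
  proof (rule fock_integral_le_of_norm_le)
    show "fock_norm p \<alpha> m (\<lambda>z. of_real (geometric_cesaro_mean n l) * f z - P f z) \<le> 1/32 * fock_norm p \<alpha> m f"
      using N0[OF that f] by (simp add: f_def cesaro_D_exp)
    show "fock_integral p \<alpha> m (\<lambda>z. of_real (geometric_cesaro_mean n l) * f z - P f z) < \<infinity>"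
      using p m by (intro fock_space_finite fock_space_scale_diff f P) auto
  qed (use fock_space_finite[OF f] p in auto)
  moreover have "fock_integral p \<alpha> m f > 0"
    unfolding f_def using p m by (intro fock_integral_pos) (auto intro!: continuous_intros)
  ultimately have "\<bar>geometric_cesaro_mean N l - geometric_cesaro_mean (8 * N) l\<bar> < 1/4"
    using p m f P[OF f] by (intro scalar_multiples_apart[where g = "P f"]) (auto simp: N_def)
  moreover have "geometric_cesaro_mean N l \<ge> 1/2" "geometric_cesaro_mean (8 * N) l \<le> 1/4"
    using geometric_cesaro_mean_ge_half geometric_cesaro_mean_le_quarter \<open>N \<ge> 1\<close> by (simp_all add: l_def)
  ultimately show False by linarith
qed

theorem theorem1:
  fixes p \<alpha> m :: real
  assumes "1 \<le> p" and "\<alpha> > 0" and "m > 0"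
    and "D_bounded p \<alpha> m"
  shows "(D_power_bounded p \<alpha> m \<and> D_uniformly_mean_ergodic p \<alpha> m) \<longleftrightarrow>
         (m < 1 \<or> (m = 1 \<and> \<alpha> < 1))"
proof
  assume ergodic: "D_power_bounded p \<alpha> m \<and> D_uniformly_mean_ergodic p \<alpha> m"
  show "m < 1 \<or> (m = 1 \<and> \<alpha> < 1)"
  proof (rule ccontr)
    assume "\<not> (m < 1 \<or> (m = 1 \<and> \<alpha> < 1))"
    then have "1 < m \<or> (m = 1 \<and> 1 \<le> \<alpha>)" by auto
    with not_D_uniformly_mean_ergodic[OF assms(1-3)] ergodic show False by blast
  qed
next
  assume "m < 1 \<or> (m = 1 \<and> \<alpha> < 1)"
  then have "m \<le> 1" "m < 1 \<or> \<alpha> < 1" by auto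
  then obtain A \<gamma> where A: "A > 0" and \<gamma>: "0 < \<gamma>" "\<gamma> < 1"
    and decay: "\<And>f k. f holomorphic_on UNIV \<Longrightarrow> k \<ge> 1 \<Longrightarrow>
        fock_integral p \<alpha> m ((Dop ^^ k) f) \<le> ennreal (A * \<gamma>^k) * fock_integral p \<alpha> m f"
    using fock_integral_Dop_power_le_geometric[OF assms(1-3)] by blast
  have "D_power_bounded p \<alpha> m"
    using assms(1) A \<gamma> by (intro D_power_bounded_if_geometric_decay[OF _ A _ _ decay]) auto
  moreover have "D_uniformly_mean_ergodic p \<alpha> m"
    by (rule D_uniformly_mean_ergodic_if_geometric_decay[OF assms(1,3) A \<gamma> decay])
  ultimately show "D_power_bounded p \<alpha> m \<and> D_uniformly_mean_ergodic p \<alpha> m" ..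
qed

end
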